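(* Let $G$ be a connected $d$-regular simple graph of order $n$, where $d\ge 3$. Then \[ \mathscr{K}_{nb}(G)=\frac{(d-2)\,\mathscr{K}_e(G)}{d}+2n+\frac{1}{d-2}-\frac{n}{d}. \]
   Context: Kemeny's constant of an irreducible finite Markov chain with transition matrix $P$ whose eigenvalues (with multiplicity) are $1=\rho_1,\rho_2,\dots,\rho_N$ (with $1$ simple) is $\mathscr{K}(P)=\sum_{i=2}^{N}\frac{1}{1-\rho_i}$; equivalently $\sum_{j\neq i}\pi_jm_{ij}$ with $\pi$ the stationary distribution and $m_{ij}$ mean first passage times. Arcs of $G$: for each edge $\{u,v\}$ the two ordered pairs $(u,v),(v,u)$. The edge Kemeny's constant $\mathscr{K}_e(G)$ is Kemeny's constant of the chain on arcs where from $(u,v)$ one moves to $(v,w)$ with probability $1/\deg(v)$ for each neighbor $w$ of $v$. The non-backtracking Kemeny's constant $\mathscr{K}_{nb}(G)$ is Kemeny's constant of the non-backtracking random walk on arcs, with transition matrix $P_{nb}$: from $(u,v)$ one moves to $(v,w)$ with probability $1/(\deg(v)-1)$ for each neighbor $w\ne u$ of $v$, all other transition probabilities being $0$. *)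

theory Defs
  imports "Jordan_Normal_Form.Char_Poly" "HOL-Computational_Algebra.Fundamental_Theorem_Algebra"
begin

definition simple_graph :: "'a set \<Rightarrow> ('a \<Rightarrow> 'a \<Rightarrow> bool) \<Rightarrow> bool" where
  "simple_graph V E \<longleftrightarrow> finite V \<and> (\<forall>u v. E u v \<longrightarrow> u \<in> V \<and> v \<in> V)
     \<and> (\<forall>u v. E u v \<longrightarrow> E v u) \<and> (\<forall>v. \<not> E v v)"

definition degree :: "'a set \<Rightarrow> ('a \<Rightarrow> 'a \<Rightarrow> bool) \<Rightarrow> 'a \<Rightarrow> nat" where
  "degree V E v = card {w \<in> V. E v w}"

definition regular :: "'a set \<Rightarrow> ('a \<Rightarrow> 'a \<Rightarrow> bool) \<Rightarrow> nat \<Rightarrow> bool" where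
  "regular V E d \<longleftrightarrow> (\<forall>v\<in>V. degree V E v = d)"

definition connected :: "'a set \<Rightarrow> ('a \<Rightarrow> 'a \<Rightarrow> bool) \<Rightarrow> bool" where
  "connected V E \<longleftrightarrow> V \<noteq> {} \<and> (\<forall>u\<in>V. \<forall>v\<in>V. (\<lambda>x y. x \<in> V \<and> y \<in> V \<and> E x y)\<^sup>*\<^sup>* u v)"

definition arcs :: "'a set \<Rightarrow> ('a \<Rightarrow> 'a \<Rightarrow> bool) \<Rightarrow> ('a \<times> 'a) set" where
  "arcs V E = {(u, v). u \<in> V \<and> v \<in> V \<and> E u v}"

text \<open>A fixed enumeration of the arcs (Kemeny's constant does not depend on it).\<close>
definition arc_list :: "'a set \<Rightarrow> ('a \<Rightarrow> 'a \<Rightarrow> bool) \<Rightarrow> ('a \<times> 'a) list" where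
  "arc_list V E = (SOME xs. distinct xs \<and> set xs = arcs V E)"

definition arc_matrix :: "'a set \<Rightarrow> ('a \<Rightarrow> 'a \<Rightarrow> bool) \<Rightarrow> ('a \<times> 'a \<Rightarrow> 'a \<times> 'a \<Rightarrow> real) \<Rightarrow> real mat" where
  "arc_matrix V E p = (let xs = arc_list V E in
     mat (length xs) (length xs) (\<lambda>(i, j). p (xs ! i) (xs ! j)))"

definition P_edge :: "'a set \<Rightarrow> ('a \<Rightarrow> 'a \<Rightarrow> bool) \<Rightarrow> real mat" where
  "P_edge V E = arc_matrix V E (\<lambda>(u, v) (v', w).
     if v' = v \<and> E v w then 1 / real (degree V E v) else 0)"

definition P_nb :: "'a set \<Rightarrow> ('a \<Rightarrow> 'a \<Rightarrow> bool) \<Rightarrow> real mat" where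
  "P_nb V E = arc_matrix V E (\<lambda>(u, v) (v', w).
     if v' = v \<and> E v w \<and> w \<noteq> u then 1 / (real (degree V E v) - 1) else 0)"

definition kemeny :: "real mat \<Rightarrow> complex" where
  "kemeny P = (\<Sum>\<rho>\<in># proots (char_poly (map_mat complex_of_real P)) - {#1#}. 1 / (1 - \<rho>))"

definition kemeny_edge :: "'a set \<Rightarrow> ('a \<Rightarrow> 'a \<Rightarrow> bool) \<Rightarrow> complex" where
  "kemeny_edge V E = kemeny (P_edge V E)"

definition kemeny_nb :: "'a set \<Rightarrow> ('a \<Rightarrow> 'a \<Rightarrow> bool) \<Rightarrow> complex" where
  "kemeny_nb V E = kemeny (P_nb V E)"

end

theory Submission
  imports
    Defs
    "Jordan_Normal_Form.Jordan_Normal_Form_Uniqueness"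
    "Jordan_Normal_Form.Jordan_Normal_Form_Existence"
begin

(*
  Let H and T be the head and tail incidence matrices between the N = n d arcs and the n
  vertices, J the arc-reversal matrix and A = T H the adjacency matrix. Then
  P_e = H T / d and P_nb = (H T - J) / c with c = d - 1, and Sylvester's identity
  det (1 - X Y) = det (1 - Y X) expresses both characteristic polynomials through that of A:
  the eigenvalues of P_e are 0 (N - n times) and \<lambda> / d, those of P_nb are 1/c and -1/c
  (m - n times each, m = N / 2 edges) and the two roots of x\<^sup>2 - (\<lambda> / c) x + 1 / c, for
  \<lambda> running over the eigenvalues of A. As G is connected, d is a simple eigenvalue of A
  (a maximum principle shows that (A - d)\<^sup>2 x = 0 forces x to be constant); it produces
  the eigenvalue 1 of both walks, and also 1 / c for P_nb. Every other \<lambda> contributes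
  d / (d - \<lambda>) to the edge Kemeny constant and 1 + (d - 2) / (d - \<lambda>) to the
  non-backtracking one, so both are affine in the sum of 1 / (d - \<lambda>), and eliminating it
  gives the formula.
*)

lemma poly_eqI_cofinite:
  fixes p q :: "'a :: {idom, ring_char_0} poly"
  assumes "finite F" and "\<And>x. x \<notin> F \<Longrightarrow> poly p x = poly q x"
  shows "p = q"
proof (rule ccontr)
  assume "p \<noteq> q"
  then have "finite {x. poly (p - q) x = 0}" by (intro poly_roots_finite) simp
  moreover have "- F \<subseteq> {x. poly (p - q) x = 0}" using assms(2) by auto
  ultimately have "finite (- F)" by (rule finite_subset[rotated])
  with assms(1) have "finite (UNIV :: 'a set)" by simp
  then show False using infinite_UNIV_char_0 by blast
qed

lemma proots_prod_mset_image:
  fixes f :: "'b \<Rightarrow> 'a :: idom poly"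
  assumes "\<And>x. f x \<noteq> 0"
  shows "proots (\<Prod>x\<in>#X. f x) = (\<Sum>x\<in>#X. proots (f x))"
proof (induction X)
  case (add x X)
  have "(\<Prod>x\<in>#X. f x) \<noteq> 0" using assms by (subst prod_mset_zero_iff) auto
  then show ?case using add.IH assms by (simp add: proots_mult)
qed simp

lemma proots_prod_linear_factors:
  fixes f :: "'b \<Rightarrow> 'a :: idom"
  shows "proots (\<Prod>x\<in>#X. [:- f x, 1:]) = image_mset f X"
  by (simp add: proots_prod_mset_image)

lemma sum_mset_sum_mset_image:
  "(\<Sum>y\<in>#(\<Sum>x\<in>#X. Y x). h y) = (\<Sum>x\<in>#X. \<Sum>y\<in>#Y x. h y)"
  by (induction X) auto

lemma sum_inverse_one_minus_proots_quadratic: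
  fixes s t :: complex
  assumes nz: "1 - s + t \<noteq> 0"
  shows "(\<Sum>\<rho>\<in>#proots [:t, - s, 1:]. 1 / (1 - \<rho>)) = (2 - s) / (1 - s + t)"
proof -
  have "\<not> constant (poly [:t, - s, 1:])" by (subst constant_degree) simp
  then obtain a where "poly [:t, - s, 1:] a = 0" using fundamental_theorem_of_algebra by blast
  then have t: "t = a * (s - a)" by (simp add: algebra_simps)
  then have factors: "[:t, - s, 1:] = [:- a, 1:] * [:- (s - a), 1:]" by (simp add: algebra_simps)
  have roots: "proots [:t, - s, 1:] = {#a, s - a#}"
    unfolding factors by (subst proots_mult) simp_all
  have prod: "(1 - a) * (1 - (s - a)) = 1 - s + t" using t by (simp add: algebra_simps)
  then have "1 - a \<noteq> 0" "1 - (s - a) \<noteq> 0" using nz by auto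
  then show ?thesis unfolding roots prod[symmetric] by (simp add: field_simps)
qed

section \<open>Determinants and characteristic polynomials\<close>

lemma det_one_minus_mult_commute:
  fixes X :: "'a :: idom mat"
  assumes X: "X \<in> carrier_mat N n" and Y: "Y \<in> carrier_mat n N"
  shows "det (1\<^sub>m N - X * Y) = det (1\<^sub>m n - Y * X)"
proof -
  define M where "M = four_block_mat (1\<^sub>m n) Y X (1\<^sub>m N)"
  define L1 where "L1 = four_block_mat (1\<^sub>m n) (0\<^sub>m n N) (- X) (1\<^sub>m N)"
  define L2 where "L2 = four_block_mat (1\<^sub>m n) (- Y) (0\<^sub>m N n) (1\<^sub>m N)"
  have M: "M \<in> carrier_mat (n + N) (n + N)" and L1: "L1 \<in> carrier_mat (n + N) (n + N)"
    and L2: "L2 \<in> carrier_mat (n + N) (n + N)"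
    unfolding M_def L1_def L2_def using X Y by auto
  have "det L1 = 1" unfolding L1_def
    by (subst det_four_block_mat_upper_right_zero[of _ n _ N]) (use X in auto)
  moreover have "det L2 = 1" unfolding L2_def
    by (subst det_four_block_mat_lower_left_zero[of _ n _ N]) (use Y in auto)
  moreover have "L1 * M = four_block_mat (1\<^sub>m n) Y (0\<^sub>m N n) (1\<^sub>m N - X * Y)"
    unfolding L1_def M_def using X Y
    by (subst mult_four_block_mat[of _ n n _ N _ N _ _ n]) (auto intro!: eq_matI)
  moreover have "det \<dots> = det (1\<^sub>m N - X * Y)"
    by (subst det_four_block_mat_lower_left_zero[of _ n _ N]) (use X Y in auto)
  moreover have "L2 * M = four_block_mat (1\<^sub>m n - Y * X) (0\<^sub>m n N) X (1\<^sub>m N)"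
    unfolding L2_def M_def using X Y
    by (subst mult_four_block_mat[of _ n n _ N _ N _ _ n]) (auto intro!: eq_matI)
  moreover have "det \<dots> = det (1\<^sub>m n - Y * X)"
    by (subst det_four_block_mat_upper_right_zero[of _ n _ N]) (use X Y in auto)
  ultimately show ?thesis using det_mult[OF L1 M] det_mult[OF L2 M] by simp
qed

lemma det_smult_one_plus_mult_commute:
  fixes X :: "'a :: field mat"
  assumes X: "X \<in> carrier_mat N n" and Y: "Y \<in> carrier_mat n N" and a: "a \<noteq> 0"
  shows "a ^ n * det (a \<cdot>\<^sub>m 1\<^sub>m N + X * Y) = a ^ N * det (a \<cdot>\<^sub>m 1\<^sub>m n + Y * X)"
proof -
  define X' where "X' = (- 1 / a) \<cdot>\<^sub>m X"
  have X': "X' \<in> carrier_mat N n" using X by (simp add: X'_def)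
  have "a \<cdot>\<^sub>m 1\<^sub>m N + X * Y = a \<cdot>\<^sub>m (1\<^sub>m N - X' * Y)"
    using X Y a by (intro eq_matI) (auto simp: X'_def mult_smult_assoc_mat[OF X Y] field_simps)
  moreover have "a \<cdot>\<^sub>m 1\<^sub>m n + Y * X = a \<cdot>\<^sub>m (1\<^sub>m n - Y * X')"
    using X Y a by (intro eq_matI) (auto simp: X'_def mult_smult_distrib[OF Y X] field_simps)
  ultimately show ?thesis
    using X Y X' by (simp add: det_smult minus_carrier_mat det_one_minus_mult_commute[OF X' Y])
qed

lemma det_minus_mult_right_inverse:
  fixes K :: "'a :: field mat"
  assumes K: "K \<in> carrier_mat N N" and L: "L \<in> carrier_mat N N"
    and KL: "K * L = s \<cdot>\<^sub>m 1\<^sub>m N" and s: "s \<noteq> 0"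
    and H: "H \<in> carrier_mat N n" and T: "T \<in> carrier_mat n N"
  shows "det (K - H * T) = det K * det (1\<^sub>m n - (1 / s) \<cdot>\<^sub>m (T * L * H))"
proof -
  define X where "X = (1 / s) \<cdot>\<^sub>m (L * H)"
  have X: "X \<in> carrier_mat N n" using L H by (simp add: X_def)
  have "K * X = (1 / s) \<cdot>\<^sub>m ((K * L) * H)"
    using K L H by (simp add: X_def mult_smult_distrib[of K N N "L * H" n] assoc_mult_mat)
  also have "\<dots> = H" using KL H s by (auto simp: mult_smult_assoc_mat[of _ N N] intro!: eq_matI)
  finally have KX: "K * X = H" .
  have "K * (1\<^sub>m N - X * T) = K * 1\<^sub>m N - K * (X * T)"
    by (rule mult_minus_distrib_mat[OF K]) (use X T in auto)
  also have "\<dots> = K - H * T" using K X T by (simp add: assoc_mult_mat[OF K X T, symmetric] KX)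
  finally have "K - H * T = K * (1\<^sub>m N - X * T)" by simp
  then have "det (K - H * T) = det K * det (1\<^sub>m n - T * X)"
    using K X T by (simp add: det_mult[OF K] minus_carrier_mat det_one_minus_mult_commute[OF X T])
  moreover have "T * X = (1 / s) \<cdot>\<^sub>m (T * L * H)"
    using T L H by (simp add: X_def mult_smult_distrib[of T n N "L * H" n] assoc_mult_mat)
  ultimately show ?thesis by simp
qed

lemma smult_one_plus_times_minus_involution:
  fixes J :: "'a :: comm_ring_1 mat"
  assumes J: "J \<in> carrier_mat N N" and JJ: "J * J = 1\<^sub>m N"
  shows "(z \<cdot>\<^sub>m 1\<^sub>m N + k \<cdot>\<^sub>m J) * (z \<cdot>\<^sub>m 1\<^sub>m N - k \<cdot>\<^sub>m J) = (z\<^sup>2 - k\<^sup>2) \<cdot>\<^sub>m 1\<^sub>m N"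
proof -
  let ?K = "z \<cdot>\<^sub>m 1\<^sub>m N + k \<cdot>\<^sub>m J"
  have K: "?K \<in> carrier_mat N N" using J by simp
  have "?K * (z \<cdot>\<^sub>m 1\<^sub>m N - k \<cdot>\<^sub>m J) = ?K * (z \<cdot>\<^sub>m 1\<^sub>m N) - ?K * (k \<cdot>\<^sub>m J)"
    by (rule mult_minus_distrib_mat[OF K]) (use J in auto)
  also have "?K * (z \<cdot>\<^sub>m 1\<^sub>m N) = z \<cdot>\<^sub>m ?K"
    using K by (simp add: mult_smult_distrib[OF K, of "1\<^sub>m N" N] right_mult_one_mat[OF K])
  also have "?K * (k \<cdot>\<^sub>m J) = k \<cdot>\<^sub>m (z \<cdot>\<^sub>m J + k \<cdot>\<^sub>m 1\<^sub>m N)"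
    using J by (simp add: mult_smult_distrib[OF K J] add_mult_distrib_mat[of _ N N]
        mult_smult_assoc_mat[of _ N N] JJ)
  finally show ?thesis
    using J by (intro eq_matI) (auto simp: power2_eq_square algebra_simps)
qed

lemma poly_char_poly_eq_det:
  fixes B :: "'a :: field mat"
  assumes "B \<in> carrier_mat n n"
  shows "poly (char_poly B) x = det (x \<cdot>\<^sub>m 1\<^sub>m n - B)"
proof -
  have "- char_matrix B x = x \<cdot>\<^sub>m 1\<^sub>m n - B"
    unfolding char_matrix_def using assms by (intro eq_matI) auto
  then show ?thesis using char_poly_matrix[OF assms] by simp
qed

lemma char_poly_eq_prod_proots:
  fixes B :: "complex mat"
  assumes "B \<in> carrier_mat n n"
  shows "char_poly B = (\<Prod>e\<in>#proots (char_poly B). [:- e, 1:])"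
  using complex_poly_decompose_multiset[of "char_poly B"] degree_monic_char_poly[OF assms]
  by simp

lemma size_proots_char_poly:
  fixes B :: "complex mat"
  assumes "B \<in> carrier_mat n n"
  shows "size (proots (char_poly B)) = n"
  using size_proots_complex degree_monic_char_poly[OF assms] by simp

lemma det_smult_one_minus_smult:
  fixes B :: "complex mat"
  assumes B: "B \<in> carrier_mat n n"
  shows "det (a \<cdot>\<^sub>m 1\<^sub>m n - w \<cdot>\<^sub>m B) = (\<Prod>e\<in>#proots (char_poly B). a - w * e)"
proof (cases "w = 0")
  case True
  then have "a \<cdot>\<^sub>m 1\<^sub>m n - w \<cdot>\<^sub>m B = a \<cdot>\<^sub>m 1\<^sub>m n" using B by (intro eq_matI) auto
  then show ?thesis using True size_proots_char_poly[OF B] by (simp add: det_smult)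
next
  case False
  have "a \<cdot>\<^sub>m 1\<^sub>m n - w \<cdot>\<^sub>m B = w \<cdot>\<^sub>m ((a / w) \<cdot>\<^sub>m 1\<^sub>m n - B)"
    using B False by (intro eq_matI) (auto simp: field_simps)
  then have "det (a \<cdot>\<^sub>m 1\<^sub>m n - w \<cdot>\<^sub>m B) = w ^ n * poly (char_poly B) (a / w)"
    using B by (simp add: det_smult poly_char_poly_eq_det)
  also have "\<dots> = w ^ n * (\<Prod>e\<in>#proots (char_poly B). a / w - e)"
    by (subst char_poly_eq_prod_proots[OF B])
      (simp add: poly_prod_mset multiset.map_comp o_def)
  also have "\<dots> = (\<Prod>e\<in>#proots (char_poly B). w * (a / w - e))"
    by (simp add: prod_mset.distrib size_proots_char_poly[OF B])
  also have "\<dots> = (\<Prod>e\<in>#proots (char_poly B). a - w * e)"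
    using False by (simp add: right_diff_distrib)
  finally show ?thesis .
qed

lemma proots_char_poly_smult:
  fixes B :: "complex mat"
  assumes B: "B \<in> carrier_mat n n"
  shows "proots (char_poly (c \<cdot>\<^sub>m B)) = image_mset ((*) c) (proots (char_poly B))"
proof -
  have "poly (char_poly (c \<cdot>\<^sub>m B)) = poly (\<Prod>e\<in>#proots (char_poly B). [:- (c * e), 1:])"
    using B by (auto simp: poly_char_poly_eq_det[of _ n] det_smult_one_minus_smult
        poly_prod_mset multiset.map_comp o_def)
  then show ?thesis by (simp add: poly_eq_poly_eq_iff proots_prod_linear_factors)
qed

lemma proots_char_poly_mult_commute:
  fixes X :: "complex mat"
  assumes X: "X \<in> carrier_mat N n" and Y: "Y \<in> carrier_mat n N" and "n \<le> N"
  shows "proots (char_poly (X * Y)) = replicate_mset (N - n) 0 + proots (char_poly (Y * X))"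
proof -
  have "char_poly (X * Y) = [:0, 1:] ^ (N - n) * char_poly (Y * X)"
  proof (rule poly_eqI_cofinite[of "{0}"])
    fix x :: complex
    assume "x \<notin> {0}"
    then have "x ^ n * det (x \<cdot>\<^sub>m 1\<^sub>m N - X * Y) = x ^ N * det (x \<cdot>\<^sub>m 1\<^sub>m n - Y * X)"
      using det_smult_one_plus_mult_commute[of "- X" N n Y x] X Y
      by (simp add: minus_add_uminus_mat[of _ N N] minus_add_uminus_mat[of _ n n])
    moreover have "x ^ N = x ^ n * x ^ (N - n)" using \<open>n \<le> N\<close> by (simp add: power_add[symmetric])
    ultimately have "x ^ n * det (x \<cdot>\<^sub>m 1\<^sub>m N - X * Y)
        = x ^ n * (x ^ (N - n) * det (x \<cdot>\<^sub>m 1\<^sub>m n - Y * X))"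
      by (simp add: mult.assoc)
    then show "poly (char_poly (X * Y)) x = poly ([:0, 1:] ^ (N - n) * char_poly (Y * X)) x"
      using X Y \<open>x \<notin> {0}\<close> by (simp add: poly_char_poly_eq_det[of _ N] poly_char_poly_eq_det[of _ n])
  qed simp
  moreover have "char_poly (Y * X) \<noteq> 0"
    using degree_monic_char_poly[of "Y * X" n] X Y by auto
  ultimately show ?thesis by (simp add: proots_mult proots_power)
qed

lemma kernel_dim_le_1:
  fixes B :: "'a :: field mat"
  assumes B: "B \<in> carrier_mat n n" and u: "u \<in> mat_kernel B"
    and multiple: "\<And>x. x \<in> mat_kernel B \<Longrightarrow> \<exists>c. x = c \<cdot>\<^sub>v u"
  shows "kernel_dim B \<le> 1"
proof -
  interpret K: kernel n n B by unfold_locales (rule B)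
  have sub: "{u} \<subseteq> mat_kernel B" using u by simp
  have "mat_kernel B \<subseteq> K.Ker.span {u}"
  proof
    fix x assume "x \<in> mat_kernel B"
    then obtain c where x: "x = c \<cdot>\<^sub>v u" using multiple by blast
    have "submodule class_ring (K.Ker.span {u}) K.VK" by (rule K.Ker.span_is_submodule[OF sub])
    moreover have "u \<in> K.Ker.span {u}" by (rule K.Ker.span_mem[OF sub]) simp
    ultimately show "x \<in> K.Ker.span {u}" unfolding x using submodule.smult_closed by force
  qed
  then have "K.Ker.span {u} = mat_kernel B" using K.Ker.span_is_subset2[OF sub] by auto
  then have "K.Ker.dim \<le> card {u}" by (intro K.Ker.gen_ge_dim) (use sub in simp_all)
  then show ?thesis by simp
qed

lemma mat_kernel_square:
  assumes "B \<in> carrier_mat n n"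
  shows "x \<in> mat_kernel (B ^\<^sub>m 2) \<longleftrightarrow> x \<in> carrier_vec n \<and> B *\<^sub>v (B *\<^sub>v x) = 0\<^sub>v n"
proof -
  have "B ^\<^sub>m 2 = B * B" using assms by (simp add: numeral_2_eq_2)
  then show ?thesis using assms by (auto simp: mat_kernel_def)
qed

lemma order_char_poly_eq_1:
  fixes A :: "complex mat"
  assumes A: "A \<in> carrier_mat n n" and ev: "eigenvalue A a"
    and dim: "dim_gen_eigenspace A a 2 \<le> 1"
  shows "Polynomial.order a (char_poly A) = 1"
proof -
  obtain as where "char_poly A = (\<Prod>a\<leftarrow>as. [:- a, 1:])"
    using char_poly_factorized[OF A] by blast
  from jordan_nf_exists[OF A this] obtain n_as where jnf: "jordan_nf A n_as" by blast
  define ks where "ks = map fst (filter (\<lambda>na. snd na = a) n_as)"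
  have "filter (\<lambda>(n, e). e = a) n_as = filter (\<lambda>na. snd na = a) n_as"
    by (rule filter_cong) auto
  then have "sum_list (map (min 2) ks) \<le> 1"
    using dim dim_gen_eigenspace[OF jnf, of a 2] by (simp add: ks_def)
  then have "\<forall>k\<in>set ks. min 2 k \<le> 1"
    using member_le_sum_list[of _ "map (min 2) ks"] by fastforce
  then have "map (min 2) ks = ks" by (induction ks) auto
  with \<open>sum_list (map (min 2) ks) \<le> 1\<close> have "sum_list ks \<le> 1" by simp
  then have "Polynomial.order a (char_poly A) \<le> 1"
    using jordan_nf_order[OF jnf, of a] by (simp add: ks_def)
  moreover have "char_poly A \<noteq> 0" using degree_monic_char_poly[OF A] by auto
  then have "Polynomial.order a (char_poly A) \<noteq> 0"
    using ev eigenvalue_root_char_poly[OF A] by (simp add: order_root)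
  ultimately show ?thesis by simp
qed

section \<open>Matrices indexed by enumerations\<close>

lemma sum_nth_distinct:
  assumes "distinct ys"
  shows "(\<Sum>k<length ys. f (ys ! k)) = (\<Sum>y\<in>set ys. f y)"
  using sum.reindex_bij_betw[OF bij_betw_nth[OF assms refl refl]] .

definition enum_mat :: "'x list \<Rightarrow> 'y list \<Rightarrow> ('x \<Rightarrow> 'y \<Rightarrow> 'c) \<Rightarrow> 'c mat" where
  "enum_mat xs ys f = mat (length xs) (length ys) (\<lambda>(i, j). f (xs ! i) (ys ! j))"

definition enum_vec :: "'y list \<Rightarrow> ('y \<Rightarrow> 'c) \<Rightarrow> 'c vec" where
  "enum_vec ys g = vec (length ys) (\<lambda>k. g (ys ! k))"

lemma enum_mat_carrier [simp]: "enum_mat xs ys f \<in> carrier_mat (length xs) (length ys)"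
  and dim_enum_mat [simp]:
    "dim_row (enum_mat xs ys f) = length xs" "dim_col (enum_mat xs ys f) = length ys"
  by (simp_all add: enum_mat_def)

lemma enum_vec_carrier [simp]: "enum_vec ys g \<in> carrier_vec (length ys)"
  and dim_enum_vec [simp]: "dim_vec (enum_vec ys g) = length ys"
  by (simp_all add: enum_vec_def)

lemma enum_mat_cong:
  assumes "\<And>x y. x \<in> set xs \<Longrightarrow> y \<in> set ys \<Longrightarrow> f x y = g x y"
  shows "enum_mat xs ys f = enum_mat xs ys g"
  using assms by (intro eq_matI) (auto simp: enum_mat_def)

lemma enum_vec_eq_iff: "enum_vec ys g = enum_vec ys h \<longleftrightarrow> (\<forall>y\<in>set ys. g y = h y)"
  by (auto simp: enum_vec_def vec_eq_iff in_set_conv_nth dest: nth_mem)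

lemma enum_vec_surj:
  assumes "distinct ys" and "v \<in> carrier_vec (length ys)"
  obtains g where "v = enum_vec ys g"
proof
  show "v = enum_vec ys (\<lambda>y. v $ inv_into {..<length ys} ((!) ys) y)"
    using assms inv_into_f_f[OF bij_betw_imp_inj_on[OF bij_betw_nth[OF assms(1) refl refl]]]
    by (intro eq_vecI) (auto simp: enum_vec_def)
qed

lemma zero_enum_vec: "0\<^sub>v (length ys) = enum_vec ys (\<lambda>_. 0)"
  by (intro eq_vecI) (auto simp: enum_vec_def)

lemma smult_enum_vec: "c \<cdot>\<^sub>v enum_vec ys g = enum_vec ys (\<lambda>y. c * g y)"
  by (intro eq_vecI) (auto simp: enum_vec_def)

lemma enum_mat_mult:
  fixes f :: "'x \<Rightarrow> 'y \<Rightarrow> 'c :: comm_semiring_0"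
  assumes "distinct ys"
  shows "enum_mat xs ys f * enum_mat ys zs g = enum_mat xs zs (\<lambda>x z. \<Sum>y\<in>set ys. f x y * g y z)"
  by (intro eq_matI)
    (auto simp: enum_mat_def scalar_prod_def atLeast0LessThan sum_nth_distinct[OF assms, symmetric])

lemma enum_mat_mult_vec:
  fixes f :: "'x \<Rightarrow> 'y \<Rightarrow> 'c :: comm_semiring_0"
  assumes "distinct ys"
  shows "enum_mat xs ys f *\<^sub>v enum_vec ys g = enum_vec xs (\<lambda>x. \<Sum>y\<in>set ys. f x y * g y)"
  by (intro eq_vecI)
    (auto simp: enum_mat_def enum_vec_def scalar_prod_def atLeast0LessThan
       sum_nth_distinct[OF assms, symmetric])

lemma one_enum_mat:
  assumes "distinct xs"
  shows "1\<^sub>m (length xs) = enum_mat xs xs (\<lambda>x y. if x = y then 1 else 0)"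
  using assms by (intro eq_matI) (auto simp: enum_mat_def nth_eq_iff_index_eq)

lemma transpose_enum_mat: "transpose_mat (enum_mat xs ys f) = enum_mat ys xs (\<lambda>y x. f x y)"
  by (intro eq_matI) (auto simp: enum_mat_def)

lemma smult_enum_mat: "c \<cdot>\<^sub>m enum_mat xs ys f = enum_mat xs ys (\<lambda>x y. c * f x y)"
  by (intro eq_matI) (auto simp: enum_mat_def)

lemma plus_enum_mat: "enum_mat xs ys f + enum_mat xs ys g = enum_mat xs ys (\<lambda>x y. f x y + g x y)"
  by (intro eq_matI) (auto simp: enum_mat_def)

lemma minus_enum_mat: "enum_mat xs ys f - enum_mat xs ys g = enum_mat xs ys (\<lambda>x y. f x y - g x y)"
  by (intro eq_matI) (auto simp: enum_mat_def)

lemma map_enum_mat: "map_mat h (enum_mat xs ys f) = enum_mat xs ys (\<lambda>x y. h (f x y))"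
  by (intro eq_matI) (auto simp: enum_mat_def)

lemma arc_matrix_eq_enum_mat: "arc_matrix V E p = enum_mat (arc_list V E) (arc_list V E) p"
  by (simp add: arc_matrix_def enum_mat_def Let_def)

lemma some_distinct_list:
  assumes "finite S"
  shows "distinct (SOME xs. distinct xs \<and> set xs = S)" "set (SOME xs. distinct xs \<and> set xs = S) = S"
proof -
  have "\<exists>xs. distinct xs \<and> set xs = S" using finite_distinct_list[OF assms] by blast
  from someI_ex[OF this] show "distinct (SOME xs. distinct xs \<and> set xs = S)"
    "set (SOME xs. distinct xs \<and> set xs = S) = S" by blast+
qed

section \<open>The maximum principle on connected graphs\<close>

lemma connected_average_const:
  fixes f :: "'a \<Rightarrow> real"
  assumes fin: "finite V" and conn: "connected V E"
    and avg: "\<And>u. u \<in> V \<Longrightarrow> (\<Sum>v\<in>{v\<in>V. E u v}. f v) = real (degree V E u) * f u"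
    and u: "u \<in> V" and v: "v \<in> V"
  shows "f u = f v"
proof -
  define fmax where "fmax = Max (f ` V)"
  have le_max: "f w \<le> fmax" if "w \<in> V" for w using fin that by (simp add: fmax_def)
  have "fmax \<in> f ` V" using fin conn by (simp add: fmax_def connected_def)
  then obtain w0 where w0: "w0 \<in> V" "f w0 = fmax" by auto
  have propagate: "f z = fmax" if y: "y \<in> V" "f y = fmax" and z: "z \<in> V" "E y z" for y z
  proof -
    have "(\<Sum>w\<in>{w\<in>V. E y w}. fmax - f w) = 0"
      using avg[OF y(1)] y(2) by (simp add: sum_subtractf degree_def)
    moreover have "(\<Sum>w\<in>{w\<in>V. E y w}. fmax - f w) = 0 \<longleftrightarrow> (\<forall>w\<in>{w\<in>V. E y w}. fmax - f w = 0)"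
      by (rule sum_nonneg_eq_0_iff) (use fin le_max in auto)
    ultimately have "\<forall>w\<in>{w\<in>V. E y w}. fmax - f w = 0" by blast
    then show ?thesis using z by simp
  qed
  have "f w = fmax" if "(\<lambda>x y. x \<in> V \<and> y \<in> V \<and> E x y)\<^sup>*\<^sup>* w0 w" for w
    using that by (induction rule: rtranclp_induct) (use w0 propagate in blast)+
  then show ?thesis using conn w0(1) u v unfolding connected_def by metis
qed

lemma connected_average_const_complex:
  fixes f :: "'a \<Rightarrow> complex"
  assumes fin: "finite V" and conn: "connected V E"
    and avg: "\<And>u. u \<in> V \<Longrightarrow> (\<Sum>v\<in>{v\<in>V. E u v}. f v) = of_nat (degree V E u) * f u"
    and u: "u \<in> V" and v: "v \<in> V"
  shows "f u = f v"
proof -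
  have "Re (f u) = Re (f v)" "Im (f u) = Im (f v)"
    using connected_average_const[OF fin conn _ u v, of "\<lambda>w. Re (f w)"]
      connected_average_const[OF fin conn _ u v, of "\<lambda>w. Im (f w)"]
      arg_cong[OF avg, of _ Re] arg_cong[OF avg, of _ Im]
    by (simp_all add: Re_sum Im_sum)
  then show ?thesis by (simp add: complex_eq_iff)
qed

section \<open>Arc matrices of simple graphs\<close>

locale simple_graph_arcs =
  fixes V :: "'a set" and E :: "'a \<Rightarrow> 'a \<Rightarrow> bool"
  assumes simple: "simple_graph V E"
begin

lemma finite_V [simp]: "finite V"
  and adj_sym: "E u v \<Longrightarrow> E v u"
  and adj_irrefl [simp]: "\<not> E v v"
  and adj_in_V: "E u v \<Longrightarrow> u \<in> V" "E u v \<Longrightarrow> v \<in> V"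
  using simple unfolding simple_graph_def by blast+

lemma mem_arcs_iff [simp]: "(u, v) \<in> arcs V E \<longleftrightarrow> E u v"
  using adj_in_V by (auto simp: arcs_def)

lemma finite_arcs [simp]: "finite (arcs V E)"
  by (rule finite_subset[of _ "V \<times> V"]) (auto simp: arcs_def)

lemma arc_ends_in_V: "a \<in> arcs V E \<Longrightarrow> fst a \<in> V" "a \<in> arcs V E \<Longrightarrow> snd a \<in> V"
  by (auto simp: arcs_def)

lemma swap_mem_arcs [simp]: "prod.swap a \<in> arcs V E \<longleftrightarrow> a \<in> arcs V E"
  by (cases a) (auto intro: adj_sym)

lemma swap_arc_neq: "a \<in> arcs V E \<Longrightarrow> prod.swap a \<noteq> a"
  by (cases a) auto

definition vs :: "'a list" where "vs = (SOME vs. distinct vs \<and> set vs = V)"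

definition edge_of :: "'a \<times> 'a \<Rightarrow> 'a set" where "edge_of a = {fst a, snd a}"

definition es :: "'a set list" where
  "es = (SOME es. distinct es \<and> set es = edge_of ` arcs V E)"

abbreviation xs :: "('a \<times> 'a) list" where "xs \<equiv> arc_list V E"

abbreviation n :: nat where "n \<equiv> length vs"
abbreviation m :: nat where "m \<equiv> length es"
abbreviation N :: nat where "N \<equiv> length xs"

lemma distinct_vs: "distinct vs" and set_vs [simp]: "set vs = V"
  unfolding vs_def by (rule some_distinct_list[OF finite_V])+

lemma distinct_xs: "distinct xs" and set_xs [simp]: "set xs = arcs V E"
  unfolding arc_list_def by (rule some_distinct_list[OF finite_arcs])+

lemma distinct_es: "distinct es" and set_es [simp]: "set es = edge_of ` arcs V E"
  unfolding es_def by (rule some_distinct_list, simp)+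

lemma card_V: "card V = n"
  using distinct_card[OF distinct_vs] by simp

lemma card_arcs: "card (arcs V E) = N"
  using distinct_card[OF distinct_xs] by simp

lemma edge_of_eq_iff:
  assumes "a \<in> arcs V E"
  shows "edge_of b = edge_of a \<longleftrightarrow> b = a \<or> b = prod.swap a"
  by (cases a, cases b) (auto simp: edge_of_def doubleton_eq_iff)

lemma card_arcs_of_edge:
  assumes "a \<in> arcs V E"
  shows "card {b \<in> arcs V E. edge_of b = edge_of a} = 2"
proof -
  have "{b \<in> arcs V E. edge_of b = edge_of a} = {a, prod.swap a}"
    using assms edge_of_eq_iff[OF assms] by auto
  then show ?thesis using swap_arc_neq[OF assms] by simp
qed

lemma N_eq_2m: "N = 2 * m"
proof -
  have "N = (\<Sum>e\<in>edge_of ` arcs V E. card {a \<in> arcs V E. edge_of a = e})"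
    using sum.group[of "arcs V E" "edge_of ` arcs V E" edge_of "\<lambda>_. 1 :: nat"]
    by (simp add: card_arcs)
  also have "\<dots> = (\<Sum>e\<in>edge_of ` arcs V E. 2)"
    by (intro sum.cong) (auto simp: card_arcs_of_edge)
  also have "\<dots> = 2 * m"
    using distinct_card[OF distinct_es] by simp
  finally show ?thesis .
qed

definition H :: "complex mat" where "H = enum_mat xs vs (\<lambda>a v. if snd a = v then 1 else 0)"
definition T :: "complex mat" where "T = enum_mat vs xs (\<lambda>v a. if fst a = v then 1 else 0)"
definition J :: "complex mat" where "J = enum_mat xs xs (\<lambda>a b. if b = prod.swap a then 1 else 0)"
definition R :: "complex mat" where "R = enum_mat xs es (\<lambda>a e. if edge_of a = e then 1 else 0)"
definition A :: "complex mat" where "A = enum_mat vs vs (\<lambda>u v. if E u v then 1 else 0)"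

lemma H_carrier [simp]: "H \<in> carrier_mat N n"
  and T_carrier [simp]: "T \<in> carrier_mat n N"
  and J_carrier [simp]: "J \<in> carrier_mat N N"
  and R_carrier [simp]: "R \<in> carrier_mat N m"
  and A_carrier [simp]: "A \<in> carrier_mat n n"
  by (simp_all add: H_def T_def J_def R_def A_def)

lemma dim_incidence_mats [simp]:
  "dim_row H = N" "dim_col H = n" "dim_row T = n" "dim_col T = N" "dim_row J = N" "dim_col J = N"
  "dim_row R = N" "dim_col R = m" "dim_row A = n" "dim_col A = n"
  by (simp_all add: H_def T_def J_def R_def A_def)

lemma H_T: "H * T = enum_mat xs xs (\<lambda>a b. if snd a = fst b then 1 else 0)"
  unfolding H_def T_def enum_mat_mult[OF distinct_vs]
  by (intro enum_mat_cong) (auto simp: arc_ends_in_V if_distrib[of "\<lambda>x. x * _"] cong: if_cong)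

lemma T_H: "T * H = A"
proof -
  have "(\<Sum>a\<in>arcs V E. (if fst a = u then 1 else 0) * (if snd a = v then 1 else 0))
      = (\<Sum>a\<in>arcs V E. if a = (u, v) then 1 else (0 :: complex))" for u v
    by (intro sum.cong) (auto simp: prod_eq_iff)
  then show ?thesis
    unfolding H_def T_def A_def enum_mat_mult[OF distinct_xs] by (intro enum_mat_cong) simp
qed

lemma T_J: "T * J = transpose_mat H"
proof -
  have "(\<Sum>a\<in>arcs V E. (if fst a = v then 1 else 0) * (if b = prod.swap a then 1 else 0))
      = (\<Sum>a\<in>arcs V E. if a = prod.swap b then if snd b = v then 1 else 0 else (0 :: complex))"
    for v b by (intro sum.cong) auto
  then show ?thesis
    unfolding H_def T_def J_def enum_mat_mult[OF distinct_xs] transpose_enum_mat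
    by (intro enum_mat_cong) simp
qed

lemma J_J: "J * J = 1\<^sub>m N"
proof -
  have "(\<Sum>b\<in>arcs V E. (if b = prod.swap a then 1 else 0) * (if c = prod.swap b then 1 else 0))
      = (\<Sum>b\<in>arcs V E. if b = prod.swap a then if a = c then 1 else 0 else (0 :: complex))"
    for a c by (intro sum.cong) auto
  then show ?thesis
    unfolding J_def enum_mat_mult[OF distinct_xs] one_enum_mat[OF distinct_xs]
    by (intro enum_mat_cong) simp
qed

lemma R_Rt: "R * transpose_mat R = 1\<^sub>m N + J"
proof -
  have "(\<Sum>e\<in>edge_of ` arcs V E. (if edge_of a = e then 1 else 0) * (if edge_of b = e then 1 else 0))
      = (if a = b then 1 else 0) + (if b = prod.swap a then 1 else (0 :: complex))"
    if "a \<in> arcs V E" "b \<in> arcs V E" for a b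
    using that edge_of_eq_iff[of a b] swap_arc_neq[of a]
    by (simp add: if_distrib[of "\<lambda>x. x * _"] cong: if_cong)
  then show ?thesis
    unfolding R_def J_def enum_mat_mult[OF distinct_es] transpose_enum_mat
      one_enum_mat[OF distinct_xs] plus_enum_mat
    by (intro enum_mat_cong) simp
qed

lemma Rt_R: "transpose_mat R * R = 2 \<cdot>\<^sub>m 1\<^sub>m m"
proof -
  have "(\<Sum>a\<in>arcs V E. (if edge_of a = e then 1 else 0) * (if edge_of a = e' then 1 else 0))
      = 2 * (if e = e' then 1 else (0 :: complex))"
    if "e \<in> edge_of ` arcs V E" for e e'
    using that card_arcs_of_edge
    by (auto simp: if_distrib[of "\<lambda>x. x * _"] sum.If_cases Int_def cong: if_cong)
  then show ?thesis
    unfolding R_def transpose_enum_mat enum_mat_mult[OF distinct_xs]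
      one_enum_mat[OF distinct_es] smult_enum_mat
    by (intro enum_mat_cong) simp
qed

lemma det_smult_one_plus_J:
  assumes "z \<noteq> k"
  shows "det (z \<cdot>\<^sub>m 1\<^sub>m N + k \<cdot>\<^sub>m J) = (z\<^sup>2 - k\<^sup>2) ^ m"
proof -
  define a where "a = z - k"
  have a: "a \<noteq> 0" using assms by (simp add: a_def)
  have Rk: "k \<cdot>\<^sub>m R \<in> carrier_mat N m" and Rt: "transpose_mat R \<in> carrier_mat m N" by simp_all
  have "k \<cdot>\<^sub>m R * transpose_mat R = k \<cdot>\<^sub>m (1\<^sub>m N + J)"
    using R_Rt by (simp add: mult_smult_assoc_mat[of _ N m _ N])
  then have "z \<cdot>\<^sub>m 1\<^sub>m N + k \<cdot>\<^sub>m J = a \<cdot>\<^sub>m 1\<^sub>m N + k \<cdot>\<^sub>m R * transpose_mat R"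
    by (intro eq_matI) (auto simp: a_def algebra_simps)
  moreover have "transpose_mat R * (k \<cdot>\<^sub>m R) = k \<cdot>\<^sub>m (2 \<cdot>\<^sub>m 1\<^sub>m m)"
    using Rt_R by (simp add: mult_smult_distrib[OF Rt R_carrier])
  then have "a \<cdot>\<^sub>m 1\<^sub>m m + transpose_mat R * (k \<cdot>\<^sub>m R) = (z + k) \<cdot>\<^sub>m 1\<^sub>m m"
    by (intro eq_matI) (auto simp: a_def)
  ultimately have "a ^ m * det (z \<cdot>\<^sub>m 1\<^sub>m N + k \<cdot>\<^sub>m J) = a ^ m * (a ^ m * (z + k) ^ m)"
    using det_smult_one_plus_mult_commute[OF Rk Rt a]
    by (simp add: N_eq_2m mult_2 power_add det_smult)
  then have "det (z \<cdot>\<^sub>m 1\<^sub>m N + k \<cdot>\<^sub>m J) = (a * (z + k)) ^ m"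
    using a by (simp add: power_mult_distrib)
  moreover have "a * (z + k) = z\<^sup>2 - k\<^sup>2" by (simp add: a_def power2_eq_square algebra_simps)
  ultimately show ?thesis by simp
qed

end

locale regular_graph = simple_graph_arcs +
  fixes d :: nat
  assumes regular: "regular V E d" and two_le_d: "2 \<le> d"
begin

lemma degree_eq [simp]: "v \<in> V \<Longrightarrow> degree V E v = d"
  using regular by (simp add: regular_def)

lemma card_arcs_into: "v \<in> V \<Longrightarrow> card {a \<in> arcs V E. snd a = v} = d"
proof -
  assume v: "v \<in> V"
  have "{a \<in> arcs V E. snd a = v} = (\<lambda>u. (u, v)) ` {u \<in> V. E v u}"
    using adj_in_V adj_sym by (auto simp: image_iff)
  moreover have "inj_on (\<lambda>u. (u, v)) {u \<in> V. E v u}" by (rule inj_onI) simp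
  ultimately have "card {a \<in> arcs V E. snd a = v} = card {u \<in> V. E v u}" by (simp add: card_image)
  then show ?thesis using degree_eq[OF v] by (simp add: degree_def)
qed

lemma N_eq_n_d: "N = n * d"
proof -
  have "N = (\<Sum>v\<in>V. card {a \<in> arcs V E. snd a = v})"
    using sum.group[of "arcs V E" V snd "\<lambda>_. 1 :: nat"] arc_ends_in_V
    by (auto simp: card_arcs image_subset_iff)
  also have "\<dots> = n * d" by (simp add: card_arcs_into card_V)
  finally show ?thesis .
qed

lemma n_le_m: "n \<le> m"
proof -
  have "n * 2 \<le> n * d" using two_le_d by (rule mult_le_mono2)
  then show ?thesis using N_eq_2m N_eq_n_d by linarith
qed

lemma Ht_H: "transpose_mat H * H = of_nat d \<cdot>\<^sub>m 1\<^sub>m n"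
proof -
  have "(\<Sum>a\<in>arcs V E. (if snd a = u then 1 else 0) * (if snd a = v then 1 else 0))
      = of_nat d * (if u = v then 1 else (0 :: complex))" if "u \<in> V" for u v
    using that card_arcs_into
    by (auto simp: if_distrib[of "\<lambda>x. x * _"] sum.If_cases Int_def cong: if_cong)
  then show ?thesis
    unfolding H_def transpose_enum_mat enum_mat_mult[OF distinct_xs]
      one_enum_mat[OF distinct_vs] smult_enum_mat
    by (intro enum_mat_cong) simp
qed

lemma T_smult_one_minus_J_H:
  "T * (z \<cdot>\<^sub>m 1\<^sub>m N - k \<cdot>\<^sub>m J) * H = z \<cdot>\<^sub>m A - (k * of_nat d) \<cdot>\<^sub>m 1\<^sub>m n"
proof -
  have "T * (z \<cdot>\<^sub>m 1\<^sub>m N - k \<cdot>\<^sub>m J) = T * (z \<cdot>\<^sub>m 1\<^sub>m N) - T * (k \<cdot>\<^sub>m J)"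
    by (rule mult_minus_distrib_mat[of _ n N]) auto
  also have "\<dots> = z \<cdot>\<^sub>m T - k \<cdot>\<^sub>m transpose_mat H"
    by (simp add: mult_smult_distrib[OF T_carrier one_carrier_mat]
        mult_smult_distrib[OF T_carrier J_carrier] right_mult_one_mat[OF T_carrier] T_J)
  finally have "T * (z \<cdot>\<^sub>m 1\<^sub>m N - k \<cdot>\<^sub>m J) * H = (z \<cdot>\<^sub>m T - k \<cdot>\<^sub>m transpose_mat H) * H"
    by simp
  also have "\<dots> = z \<cdot>\<^sub>m (T * H) - k \<cdot>\<^sub>m (transpose_mat H * H)"
    by (subst minus_mult_distrib_mat[of _ n N _ _ n])
      (auto simp: mult_smult_assoc_mat[OF T_carrier H_carrier] mult_smult_assoc_mat[of _ n N H n])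
  also have "\<dots> = z \<cdot>\<^sub>m A - (k * of_nat d) \<cdot>\<^sub>m 1\<^sub>m n"
    unfolding T_H Ht_H by (intro eq_matI) auto
  finally show ?thesis .
qed

lemma P_edge_eq: "map_mat complex_of_real (P_edge V E) = (1 / of_nat d) \<cdot>\<^sub>m (H * T)"
  unfolding P_edge_def arc_matrix_eq_enum_mat map_enum_mat H_T smult_enum_mat
  by (intro enum_mat_cong) (auto simp: arcs_def)

lemma P_nb_eq: "map_mat complex_of_real (P_nb V E) = (1 / (of_nat d - 1)) \<cdot>\<^sub>m (H * T - J)"
  unfolding P_nb_def arc_matrix_eq_enum_mat map_enum_mat H_T J_def minus_enum_mat smult_enum_mat
  by (intro enum_mat_cong) (auto simp: arcs_def)

lemma proots_P_edge:
  "proots (char_poly (map_mat complex_of_real (P_edge V E)))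
    = replicate_mset (N - n) 0 + image_mset (\<lambda>e. e / of_nat d) (proots (char_poly A))"
proof -
  have "map_mat complex_of_real (P_edge V E) = ((1 / of_nat d) \<cdot>\<^sub>m H) * T"
    by (simp add: P_edge_eq mult_smult_assoc_mat[OF H_carrier T_carrier])
  moreover have "T * ((1 / of_nat d) \<cdot>\<^sub>m H) = (1 / of_nat d) \<cdot>\<^sub>m A"
    by (simp add: mult_smult_distrib[OF T_carrier H_carrier] T_H)
  moreover have "n \<le> N" using n_le_m N_eq_2m by simp
  moreover have "(*) (1 / of_nat d) = (\<lambda>e. e / (of_nat d :: complex))" by auto
  ultimately show ?thesis
    using proots_char_poly_mult_commute[of "(1 / of_nat d) \<cdot>\<^sub>m H" N n T]
    by (simp add: proots_char_poly_smult[OF A_carrier])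
qed

lemma char_poly_P_nb:
  defines "c \<equiv> of_nat d - 1 :: complex"
  shows "char_poly (map_mat complex_of_real (P_nb V E))
    = [:- (1 / c\<^sup>2), 0, 1:] ^ (m - n) * (\<Prod>e\<in>#proots (char_poly A). [:1 / c, - (e / c), 1:])"
proof (rule poly_eqI_cofinite[of "{1 / c, - (1 / c)}"])
  have c: "c \<noteq> 0" and d: "of_nat d = c + 1" using two_le_d by (auto simp: c_def)
  fix z :: complex
  assume z: "z \<notin> {1 / c, - (1 / c)}"
  define s where "s = z\<^sup>2 - (1 / c)\<^sup>2"
  have s: "s \<noteq> 0" using z by (auto simp: s_def power2_eq_iff)
  define K where "K = z \<cdot>\<^sub>m 1\<^sub>m N + (1 / c) \<cdot>\<^sub>m J"
  define L where "L = z \<cdot>\<^sub>m 1\<^sub>m N - (1 / c) \<cdot>\<^sub>m J"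
  have L: "L \<in> carrier_mat N N" by (simp add: L_def minus_carrier_mat)
  have "(1 / c) \<cdot>\<^sub>m T * L * H = (1 / c) \<cdot>\<^sub>m (T * L * H)"
    by (simp add: mult_smult_assoc_mat[OF T_carrier L]
        mult_smult_assoc_mat[OF mult_carrier_mat[OF T_carrier L] H_carrier])
  also have "T * L * H = z \<cdot>\<^sub>m A - (1 / c * of_nat d) \<cdot>\<^sub>m 1\<^sub>m n"
    unfolding L_def by (rule T_smult_one_minus_J_H)
  finally have "1\<^sub>m n - (1 / s) \<cdot>\<^sub>m ((1 / c) \<cdot>\<^sub>m T * L * H)
      = (1 / s) \<cdot>\<^sub>m ((z\<^sup>2 + 1 / c) \<cdot>\<^sub>m 1\<^sub>m n - (z / c) \<cdot>\<^sub>m A)"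
    using c s by (intro eq_matI) (auto simp: s_def d field_simps power2_eq_square)
  moreover have "z \<cdot>\<^sub>m 1\<^sub>m N - map_mat complex_of_real (P_nb V E) = K - H * ((1 / c) \<cdot>\<^sub>m T)"
    unfolding P_nb_eq K_def c_def[symmetric]
    by (intro eq_matI) (auto simp: mult_smult_distrib[OF H_carrier T_carrier] diff_divide_distrib)
  then have "poly (char_poly (map_mat complex_of_real (P_nb V E))) z = det (K - H * ((1 / c) \<cdot>\<^sub>m T))"
    using poly_char_poly_eq_det[of "map_mat complex_of_real (P_nb V E)" N]
    by (simp add: P_nb_eq[folded c_def] minus_carrier_mat)
  moreover have "det (K - H * ((1 / c) \<cdot>\<^sub>m T))
      = det K * det (1\<^sub>m n - (1 / s) \<cdot>\<^sub>m ((1 / c) \<cdot>\<^sub>m T * L * H))"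
    by (rule det_minus_mult_right_inverse[OF _ L _ s])
      (auto simp: K_def L_def s_def smult_one_plus_times_minus_involution[OF J_carrier J_J])
  moreover have "det K = s ^ m"
    using z by (simp add: K_def s_def det_smult_one_plus_J)
  ultimately have "poly (char_poly (map_mat complex_of_real (P_nb V E))) z
      = s ^ m * ((1 / s) ^ n * (\<Prod>e\<in>#proots (char_poly A). z\<^sup>2 + 1 / c - z / c * e))"
    by (simp add: det_smult det_smult_one_minus_smult[OF A_carrier])
  also have "\<dots> = s ^ (m - n) * (\<Prod>e\<in>#proots (char_poly A). z\<^sup>2 + 1 / c - z / c * e)"
    using s n_le_m by (simp add: power_diff field_simps)
  finally show "poly (char_poly (map_mat complex_of_real (P_nb V E))) z
    = poly ([:- (1 / c\<^sup>2), 0, 1:] ^ (m - n) * (\<Prod>e\<in>#proots (char_poly A). [:1 / c, - (e / c), 1:])) z"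
    by (simp add: s_def poly_prod_mset multiset.map_comp o_def power2_eq_square algebra_simps)
qed simp

lemma sum_neighbours: "(\<Sum>u\<in>V. \<Sum>v\<in>{v\<in>V. E u v}. g v) = of_nat d * (\<Sum>v\<in>V. g v)"
proof -
  have "(\<Sum>u\<in>V. \<Sum>v\<in>{v\<in>V. E u v}. g v) = (\<Sum>u\<in>V. \<Sum>v\<in>V. if E u v then g v else 0)"
    by (simp add: sum.inter_filter)
  also have "\<dots> = (\<Sum>v\<in>V. \<Sum>u\<in>V. if E v u then g v else 0)"
    by (subst sum.swap) (intro sum.cong refl, metis adj_sym)
  also have "\<dots> = (\<Sum>v\<in>V. of_nat d * g v)"
    using degree_eq by (simp add: sum.inter_filter[symmetric] degree_def)
  finally show ?thesis by (simp add: sum_distrib_left)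
qed

lemma char_matrix_A_mult_enum_vec:
  "char_matrix A (of_nat d) *\<^sub>v enum_vec vs g
    = enum_vec vs (\<lambda>u. (\<Sum>v\<in>{v\<in>V. E u v}. g v) - of_nat d * g u)"
proof -
  have "char_matrix A (of_nat d)
      = enum_mat vs vs (\<lambda>u v. (if E u v then 1 else 0) - (if u = v then of_nat d else 0))"
    unfolding char_matrix_def A_def
    by (auto simp: one_enum_mat[OF distinct_vs] smult_enum_mat plus_enum_mat intro!: enum_mat_cong)
  then show ?thesis
    by (simp add: enum_mat_mult_vec[OF distinct_vs] enum_vec_eq_iff left_diff_distrib sum_subtractf
        sum.inter_filter if_distrib[of "\<lambda>x. x * _"] cong: if_cong)
qed

end

locale connected_regular_graph = regular_graph +
  assumes connected: "connected V E"
begin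

lemma n_pos: "0 < n"
  using connected card_V by (auto simp: connected_def card_gt_0_iff)

abbreviation ones :: "complex vec" where "ones \<equiv> enum_vec vs (\<lambda>_. 1)"

lemma kernel_char_matrix_A_square:
  assumes "x \<in> mat_kernel (char_matrix A (of_nat d) ^\<^sub>m 2)"
  shows "\<exists>c. x = c \<cdot>\<^sub>v ones"
proof -
  let ?C = "char_matrix A (of_nat d)"
  define lap where "lap g u = (\<Sum>v\<in>{v\<in>V. E u v}. g v) - of_nat d * g u" for g :: "'a \<Rightarrow> complex" and u
  have harmonic_const: "h u = h v" if "\<forall>w\<in>V. lap h w = 0" "u \<in> V" "v \<in> V" for h u v
  proof (rule connected_average_const_complex[OF finite_V connected _ that(2,3)])
    fix w assume "w \<in> V"
    then show "(\<Sum>v\<in>{v\<in>V. E w v}. h v) = of_nat (degree V E w) * h w"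
      using that(1) by (simp add: lap_def)
  qed
  have x: "x \<in> carrier_vec n" and "?C *\<^sub>v (?C *\<^sub>v x) = 0\<^sub>v n"
    using assms mat_kernel_square[of ?C n] by simp_all
  moreover obtain g where g: "x = enum_vec vs g" using enum_vec_surj[OF distinct_vs x] .
  ultimately have "\<forall>u\<in>V. lap (lap g) u = 0"
    by (simp add: char_matrix_A_mult_enum_vec lap_def[symmetric] zero_enum_vec enum_vec_eq_iff)
  define u0 where "u0 = vs ! 0"
  have u0: "u0 \<in> V" using n_pos nth_mem[of 0 vs] by (simp add: u0_def)
  have lap_const: "lap g u = lap g u0" if "u \<in> V" for u
    using harmonic_const[OF \<open>\<forall>u\<in>V. lap (lap g) u = 0\<close> that u0] .
  have "(\<Sum>u\<in>V. lap g u) = (\<Sum>u\<in>V. lap g u0)" by (rule sum.cong[OF refl lap_const])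
  then have "of_nat n * lap g u0 = (\<Sum>u\<in>V. lap g u)" using card_V by simp
  \<comment> \<open>the entries of \<open>(A - d) x\<close> sum to zero because every column of A sums to d\<close>
  also have "\<dots> = 0"
    by (simp add: lap_def sum_subtractf sum_neighbours sum_distrib_left)
  finally have "lap g u0 = 0" using n_pos by simp
  then have "\<forall>u\<in>V. lap g u = 0" using lap_const by (metis trans)
  then have "\<forall>u\<in>V. g u = g u0" using harmonic_const[of g _ u0] u0 by blast
  then have "x = g u0 \<cdot>\<^sub>v ones"
    unfolding g smult_enum_vec enum_vec_eq_iff mult_1_right set_vs .
  then show ?thesis by blast
qed

lemma count_proots_char_poly_A_d: "count (proots (char_poly A)) (of_nat d) = 1"
proof -
  let ?C = "char_matrix A (of_nat d)"
  have "?C *\<^sub>v ones = 0\<^sub>v n"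
    by (simp add: char_matrix_A_mult_enum_vec zero_enum_vec enum_vec_eq_iff degree_def[symmetric])
  moreover have "ones \<noteq> 0\<^sub>v n"
  proof
    assume "ones = 0\<^sub>v n"
    then have "ones $ 0 = 0\<^sub>v n $ 0" by simp
    then show False using n_pos by (simp add: enum_vec_def)
  qed
  ultimately have "eigenvalue A (of_nat d)"
    unfolding eigenvalue_def eigenvector_char_matrix[OF A_carrier] by (intro exI[of _ ones]) simp
  moreover have "dim_gen_eigenspace A (of_nat d) 2 \<le> 1"
    unfolding dim_gen_eigenspace_def
  proof (rule kernel_dim_le_1[of _ n ones])
    show "ones \<in> mat_kernel (?C ^\<^sub>m 2)"
      using \<open>?C *\<^sub>v ones = 0\<^sub>v n\<close> mat_kernel_square[of ?C n]
      by (simp add: zero_enum_vec char_matrix_A_mult_enum_vec)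
  qed (auto simp: kernel_char_matrix_A_square)
  moreover have "char_poly A \<noteq> 0" using degree_monic_char_poly[OF A_carrier] by auto
  ultimately show ?thesis using order_char_poly_eq_1[OF A_carrier] by simp
qed

definition nontrivial_eigs :: "complex multiset" where
  "nontrivial_eigs = proots (char_poly A) - {#of_nat d#}"

lemma proots_char_poly_A: "proots (char_poly A) = add_mset (of_nat d) nontrivial_eigs"
proof -
  have "of_nat d \<in># proots (char_poly A)"
    using count_proots_char_poly_A_d by (simp add: count_greater_zero_iff[symmetric])
  then show ?thesis by (simp add: nontrivial_eigs_def insert_DiffM)
qed

lemma d_notin_nontrivial_eigs: "of_nat d \<notin># nontrivial_eigs"
  using count_proots_char_poly_A_d by (simp add: nontrivial_eigs_def not_in_iff)

lemma size_nontrivial_eigs: "size nontrivial_eigs = n - 1"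
  using size_proots_char_poly[OF A_carrier] by (simp add: proots_char_poly_A)

lemma kemeny_edge_eq:
  "kemeny_edge V E = of_nat (N - n) + of_nat d * (\<Sum>e\<in>#nontrivial_eigs. 1 / (of_nat d - e))"
proof -
  have d: "(of_nat d :: complex) \<noteq> 0" using two_le_d by simp
  then have "proots (char_poly (map_mat complex_of_real (P_edge V E)))
      = add_mset 1 (replicate_mset (N - n) 0 + image_mset (\<lambda>e. e / of_nat d) nontrivial_eigs)"
    by (simp add: proots_P_edge proots_char_poly_A)
  moreover have "image_mset (\<lambda>\<rho>. 1 / (1 - \<rho>)) (image_mset (\<lambda>e. e / of_nat d) nontrivial_eigs)
      = image_mset (\<lambda>e. of_nat d * (1 / (of_nat d - e))) nontrivial_eigs"
    unfolding multiset.map_comp o_def using d by (intro image_mset_cong) (simp add: field_simps)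
  ultimately show ?thesis
    by (simp add: kemeny_edge_def kemeny_def sum_mset_distrib_left multiset.map_comp o_def)
qed

lemma kemeny_nb_eq:
  defines "c \<equiv> of_nat d - 1 :: complex"
  shows "kemeny_nb V E = of_nat (m - n) * (1 / (1 - 1 / c) + 1 / (1 + 1 / c)) + 1 / (1 - 1 / c)
    + of_nat (n - 1) + (of_nat d - 2) * (\<Sum>e\<in>#nontrivial_eigs. 1 / (of_nat d - e))"
proof -
  have c: "c \<noteq> 0" and d: "of_nat d = c + 1" using two_le_d by (auto simp: c_def)
  have square: "[:- (1 / c\<^sup>2), 0, 1:] = [:- (1 / c), 1:] * [:1 / c, 1:]"
    by (simp add: power2_eq_square)
  have roots_square: "proots [:- (1 / c\<^sup>2), 0, 1:] = {#1 / c, - (1 / c)#}"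
    unfolding square by (subst proots_mult) simp_all
  have factor_d: "[:1 / c, - (of_nat d / c), 1:] = [:- 1, 1:] * [:- (1 / c), 1:]"
    using c by (simp add: d field_simps)
  have roots_d: "proots [:1 / c, - (of_nat d / c), 1:] = {#1, 1 / c#}"
    unfolding factor_d by (subst proots_mult) simp_all
  have "(\<Prod>e\<in>#proots (char_poly A). [:1 / c, - (e / c), 1:]) \<noteq> 0"
    by (subst prod_mset_zero_iff) auto
  then have "proots (char_poly (map_mat complex_of_real (P_nb V E)))
      = proots ([:- (1 / c\<^sup>2), 0, 1:] ^ (m - n))
        + proots (\<Prod>e\<in>#proots (char_poly A). [:1 / c, - (e / c), 1:])"
    unfolding char_poly_P_nb[folded c_def] by (intro proots_mult) simp_all
  also have "proots (\<Prod>e\<in>#proots (char_poly A). [:1 / c, - (e / c), 1:])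
      = proots [:1 / c, - (of_nat d / c), 1:]
        + (\<Sum>e\<in>#nontrivial_eigs. proots [:1 / c, - (e / c), 1:])"
    by (subst proots_prod_mset_image) (simp_all add: proots_char_poly_A)
  finally have roots: "proots (char_poly (map_mat complex_of_real (P_nb V E)))
      = add_mset 1 (replicate_mset (m - n) (1 / c) + replicate_mset (m - n) (- (1 / c)) + {#1 / c#}
          + (\<Sum>e\<in>#nontrivial_eigs. proots [:1 / c, - (e / c), 1:]))"
    by (simp add: proots_power roots_square roots_d)
  have quadratic_term: "(\<Sum>\<rho>\<in>#proots [:1 / c, - (e / c), 1:]. 1 / (1 - \<rho>))
      = 1 + (of_nat d - 2) * (1 / (of_nat d - e))"
    if "e \<in># nontrivial_eigs" for e
  proof -
    have de: "c + 1 - e \<noteq> 0" using that d_notin_nontrivial_eigs by (auto simp: d)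
    have "1 - e / c + 1 / c = (c + 1 - e) / c" using c by (simp add: field_simps)
    then have "(\<Sum>\<rho>\<in>#proots [:1 / c, - (e / c), 1:]. 1 / (1 - \<rho>)) = (2 - e / c) / ((c + 1 - e) / c)"
      using sum_inverse_one_minus_proots_quadratic[of "e / c" "1 / c"] c de by simp
    also have "\<dots> = (2 - e / c) * c / (c + 1 - e)" by simp
    also have "(2 - e / c) * c = 2 * c - e" using c by (simp add: field_simps)
    also have "(2 * c - e) / (c + 1 - e) = 1 + (c - 1) / (c + 1 - e)"
      using de by (simp add: field_simps)
    finally show ?thesis by (simp add: d algebra_simps)
  qed
  have "kemeny_nb V E = of_nat (m - n) * (1 / (1 - 1 / c)) + of_nat (m - n) * (1 / (1 - - (1 / c)))
      + 1 / (1 - 1 / c) + (\<Sum>e\<in>#nontrivial_eigs. \<Sum>\<rho>\<in>#proots [:1 / c, - (e / c), 1:]. 1 / (1 - \<rho>))"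
    unfolding kemeny_nb_def kemeny_def roots by (simp add: sum_mset_sum_mset_image)
  also have "(\<Sum>e\<in>#nontrivial_eigs. \<Sum>\<rho>\<in>#proots [:1 / c, - (e / c), 1:]. 1 / (1 - \<rho>))
      = (\<Sum>e\<in>#nontrivial_eigs. 1 + (of_nat d - 2) * (1 / (of_nat d - e)))"
    by (intro arg_cong[where f = sum_mset] image_mset_cong quadratic_term)
  also have "\<dots> = of_nat (n - 1) + (of_nat d - 2) * (\<Sum>e\<in>#nontrivial_eigs. 1 / (of_nat d - e))"
    by (simp add: sum_mset.distrib sum_mset_distrib_left size_nontrivial_eigs
        multiset.map_comp o_def)
  finally show ?thesis by (simp add: algebra_simps)
qed

lemma kemeny_nb_eq_kemeny_edge:
  assumes "3 \<le> d"
  shows "kemeny_nb V E = (of_nat d - 2) * kemeny_edge V E / of_nat d + 2 * of_nat n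
    + 1 / (of_nat d - 2) - of_nat n / of_nat d"
proof -
  let ?D = "of_nat d :: complex"
  define S where "S = (\<Sum>e\<in>#nontrivial_eigs. 1 / (?D - e))"
  have D0: "?D \<noteq> 0" and D1: "?D - 1 \<noteq> 0" using assms by auto
  have "?D \<noteq> of_nat 2" using assms by (simp only: of_nat_eq_iff)
  then have D2: "?D - 2 \<noteq> 0" by simp
  have n_le_N: "n \<le> N" using n_le_m N_eq_2m by simp
  have edge: "kemeny_edge V E = ?D * of_nat n - of_nat n + ?D * S"
    using n_le_N by (simp add: kemeny_edge_eq S_def N_eq_n_d of_nat_diff)
  have "2 * m = n * d" using N_eq_2m N_eq_n_d by simp
  then have "of_nat (2 * m) = (of_nat (n * d) :: complex)" by (rule arg_cong)
  then have "of_nat (m - n) = of_nat n * ?D / 2 - (of_nat n :: complex)"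
    using n_le_m by (simp add: of_nat_diff field_simps)
  moreover have "1 / (1 - 1 / (?D - 1)) = (?D - 1) / (?D - 2)"
    and "1 / (1 + 1 / (?D - 1)) = (?D - 1) / ?D"
    using D0 D1 D2 by (simp_all add: field_simps)
  moreover have "of_nat (n - 1) = of_nat n - (1 :: complex)"
    using n_pos by (subst of_nat_diff) (simp_all add: Suc_le_eq)
  ultimately have nb: "kemeny_nb V E
      = (of_nat n * ?D / 2 - of_nat n) * ((?D - 1) / (?D - 2) + (?D - 1) / ?D)
        + (?D - 1) / (?D - 2) + (of_nat n - 1) + (?D - 2) * S"
    by (simp add: kemeny_nb_eq S_def)
  have "(?D - 1) / (?D - 2) + (?D - 1) / ?D = 2 * (?D - 1)\<^sup>2 / (?D * (?D - 2))"
    using D0 D2 by (simp add: field_simps power2_eq_square)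
  then have "(of_nat n * ?D / 2 - of_nat n) * ((?D - 1) / (?D - 2) + (?D - 1) / ?D)
      = of_nat n * (?D - 1)\<^sup>2 / ?D"
    using D0 D2 by (simp add: field_simps power2_eq_square)
  moreover have "(?D - 1) / (?D - 2) = 1 + 1 / (?D - 2)" using D2 by (simp add: field_simps)
  ultimately show ?thesis
    unfolding edge nb using D0 by (simp add: field_simps power2_eq_square)
qed

end

theorem theorem3p2:
  fixes V :: "'a set" and E :: "'a \<Rightarrow> 'a \<Rightarrow> bool" and d n :: nat
  assumes "simple_graph V E" and "connected V E" and "regular V E d"
    and "card V = n" and "d \<ge> 3"
  shows "kemeny_nb V E = (of_nat d - 2) * kemeny_edge V E / of_nat d + 2 * of_nat n
           + 1 / (of_nat d - 2) - of_nat n / of_nat d"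
proof -
  interpret connected_regular_graph V E d
    by unfold_locales (use assms in auto)
  show ?thesis using kemeny_nb_eq_kemeny_edge \<open>d \<ge> 3\<close> card_V \<open>card V = n\<close> by simp
qed

end
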